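(* Let $\varphi(x)$, $x\in\mathbb{C}^n$, be given in conjunctive normal form $$\varphi(x)=\bigwedge_{i=1}^{d}\Big(\bigvee_{j=1}^{e_i} t_{ij}(x)=0\;\vee\;\bigvee_{k=1}^{f_i} u_{ik}(x)\neq 0\Big),$$ with $t_{ij},u_{ik}\in\mathbb{C}[x_1,\dots,x_n]$, having $d\ge1$ conjuncts and at most $f$ inequations per conjunct ($f_i\le f$). Then there is a polynomial $q(a,b,x)\in\mathbb{C}[a,b,x]$ of degree at most $2d-1$ in $a$ and at most $f+1$ in $b$ such that for all $x\in\mathbb{C}^n$, $$\varphi(x)\iff(\forall a\in\mathbb{C})(\exists b\in\mathbb{C})\;q(a,b,x)=0.$$ Explicitly, one may take $$q(a,b,x)=\Big[1-b\prod_{i=1}^d(a-i)\Big]\Big[\sum_{i=1}^d\prod_{h\neq i}(a-h)\prod_{j=1}^{e_i}t_{ij}(x)\prod_{k=1}^{f_i}\big(1-b\,u_{ik}(x)\big)\Big],$$ where $h$ ranges over $\{1,\dots,d\}\setminus\{i\}$.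
   Context: Empty products are $1$; $a,b$ are single scalar variables. *)

theory Defs
  imports "HOL-Analysis.Analysis"
begin

text \<open>Over the complex numbers these are exactly
  the functions induced by elements of C[x_1,...,x_n].\<close>
inductive cpoly_fun :: "(complex^'n \<Rightarrow> complex) \<Rightarrow> bool" where
  const: "cpoly_fun (\<lambda>x. c)"
| var: "cpoly_fun (\<lambda>x. x $ i)"
| add: "cpoly_fun p \<Longrightarrow> cpoly_fun q \<Longrightarrow> cpoly_fun (\<lambda>x. p x + q x)"
| mult: "cpoly_fun p \<Longrightarrow> cpoly_fun q \<Longrightarrow> cpoly_fun (\<lambda>x. p x * q x)"

definition cnf_eval ::
  "nat \<Rightarrow> (nat \<Rightarrow> nat) \<Rightarrow> (nat \<Rightarrow> nat) \<Rightarrow> (nat \<Rightarrow> nat \<Rightarrow> complex^'n \<Rightarrow> complex)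
   \<Rightarrow> (nat \<Rightarrow> nat \<Rightarrow> complex^'n \<Rightarrow> complex) \<Rightarrow> complex^'n \<Rightarrow> bool" where
  "cnf_eval d e fi t u x \<longleftrightarrow>
     (\<forall>i\<in>{1..d}. (\<exists>j\<in>{1..e i}. t i j x = 0) \<or> (\<exists>k\<in>{1..fi i}. u i k x \<noteq> 0))"

definition q_explicit ::
  "nat \<Rightarrow> (nat \<Rightarrow> nat) \<Rightarrow> (nat \<Rightarrow> nat) \<Rightarrow> (nat \<Rightarrow> nat \<Rightarrow> complex^'n \<Rightarrow> complex)
   \<Rightarrow> (nat \<Rightarrow> nat \<Rightarrow> complex^'n \<Rightarrow> complex) \<Rightarrow> complex \<Rightarrow> complex \<Rightarrow> complex^'n \<Rightarrow> complex" where
  "q_explicit d e fi t u a b x =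
     (1 - b * (\<Prod>i=1..d. a - of_nat i)) *
     (\<Sum>i=1..d. (\<Prod>h\<in>{1..d} - {i}. a - of_nat h) * (\<Prod>j=1..e i. t i j x)
                 * (\<Prod>k=1..fi i. 1 - b * u i k x))"

end

(* At a node a = i with i in {1..d}, every summand except the i-th contains the factor a - i,
   and the first factor of q is 1. So some b makes q vanish iff the i-th clause holds: either some
   t_ij vanishes, or some u_ik is nonzero and b = 1/u_ik kills 1 - b u_ik (Rabinowitsch's trick).
   Away from the nodes, b = 1/((a-1)...(a-d)) kills the first factor. The degree bounds follow
   because polynomials in a and b with coefficients polynomial in x are closed under sums and
   products, with degrees adding up. *)
theory Submission
  imports Defs
begin

definition ab_poly :: "(complex \<Rightarrow> complex \<Rightarrow> complex^'n \<Rightarrow> complex) \<Rightarrow> nat \<Rightarrow> nat \<Rightarrow> bool" where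
  "ab_poly g N M \<longleftrightarrow> (\<exists>c :: nat \<Rightarrow> nat \<Rightarrow> complex^'n \<Rightarrow> complex.
     (\<forall>p r. cpoly_fun (c p r)) \<and>
     (\<forall>a b x. g a b x = (\<Sum>p\<le>N. \<Sum>r\<le>M. c p r x * a ^ p * b ^ r)))"

lemma cpoly_fun_prod:
  "finite A \<Longrightarrow> (\<And>i. i \<in> A \<Longrightarrow> cpoly_fun (f i)) \<Longrightarrow> cpoly_fun (\<lambda>x. \<Prod>i\<in>A. f i x)"
  by (induction rule: finite_induct) (auto intro: cpoly_fun.intros)

lemma ab_polyI:
  assumes "\<And>p r. cpoly_fun (c p r)"
    and "\<And>a b x. g a b x = (\<Sum>p\<le>N. \<Sum>r\<le>M. c p r x * a ^ p * b ^ r)"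
  shows "ab_poly g N M"
  using assms unfolding ab_poly_def by blast

lemma ab_poly_mono:
  assumes "ab_poly g N M" "N \<le> N'" "M \<le> M'"
  shows "ab_poly g N' M'"
proof -
  obtain c where c: "\<And>a b x. g a b x = (\<Sum>p\<le>N. \<Sum>r\<le>M. c p r x * a ^ p * b ^ r)"
    "\<And>p r. cpoly_fun (c p r)"
    using assms(1) unfolding ab_poly_def by blast
  define c' where "c' p r = (if p \<le> N \<and> r \<le> M then c p r else (\<lambda>x. 0))" for p r
  show ?thesis
  proof (rule ab_polyI)
    show "cpoly_fun (c' p r)" for p r
      using c(2) by (auto simp: c'_def intro: cpoly_fun.const)
    fix a b x
    have "(\<Sum>p\<le>N'. \<Sum>r\<le>M'. c' p r x * a ^ p * b ^ r) = (\<Sum>p\<le>N. \<Sum>r\<le>M'. c' p r x * a ^ p * b ^ r)"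
      by (rule sum.mono_neutral_right) (use assms in \<open>auto simp: c'_def\<close>)
    also have "\<dots> = (\<Sum>p\<le>N. \<Sum>r\<le>M. c' p r x * a ^ p * b ^ r)"
      by (intro sum.cong refl sum.mono_neutral_right) (use assms in \<open>auto simp: c'_def\<close>)
    also have "\<dots> = g a b x"
      by (simp add: c'_def c(1))
    finally show "g a b x = (\<Sum>p\<le>N'. \<Sum>r\<le>M'. c' p r x * a ^ p * b ^ r)" ..
  qed
qed

lemma ab_poly_coeff: "cpoly_fun k \<Longrightarrow> ab_poly (\<lambda>a b x. k x) 0 0"
  by (rule ab_polyI[of "\<lambda>p r. k"]) simp_all

lemma ab_poly_var_a: "ab_poly (\<lambda>a b x. a) 1 0"
  by (rule ab_polyI[of "\<lambda>p r x. if p = 1 then 1 else 0"]) (simp_all add: cpoly_fun.const)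

lemma ab_poly_var_b: "ab_poly (\<lambda>a b x. b) 0 1"
  by (rule ab_polyI[of "\<lambda>p r x. if r = 1 then 1 else 0"]) (simp_all add: cpoly_fun.const)

lemma ab_poly_add:
  assumes "ab_poly g N M" "ab_poly h N M"
  shows "ab_poly (\<lambda>a b x. g a b x + h a b x) N M"
proof -
  obtain c1 where c1: "\<And>a b x. g a b x = (\<Sum>p\<le>N. \<Sum>r\<le>M. c1 p r x * a ^ p * b ^ r)"
    "\<And>p r. cpoly_fun (c1 p r)"
    using assms(1) unfolding ab_poly_def by blast
  obtain c2 where c2: "\<And>a b x. h a b x = (\<Sum>p\<le>N. \<Sum>r\<le>M. c2 p r x * a ^ p * b ^ r)"
    "\<And>p r. cpoly_fun (c2 p r)"
    using assms(2) unfolding ab_poly_def by blast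
  show ?thesis
    by (rule ab_polyI[of "\<lambda>p r x. c1 p r x + c2 p r x"])
       (simp_all add: c1 c2 cpoly_fun.add distrib_right sum.distrib)
qed

lemma ab_poly_mult_coeff:
  assumes "cpoly_fun k" "ab_poly g N M"
  shows "ab_poly (\<lambda>a b x. k x * g a b x) N M"
proof -
  obtain c where c: "\<And>a b x. g a b x = (\<Sum>p\<le>N. \<Sum>r\<le>M. c p r x * a ^ p * b ^ r)"
    "\<And>p r. cpoly_fun (c p r)"
    using assms(2) unfolding ab_poly_def by blast
  show ?thesis
    by (rule ab_polyI[of "\<lambda>p r x. k x * c p r x"])
       (simp_all add: c assms(1) cpoly_fun.mult sum_distrib_left mult.assoc)
qed

lemma ab_poly_diff:
  assumes "ab_poly g N M" "ab_poly h N M"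
  shows "ab_poly (\<lambda>a b x. g a b x - h a b x) N M"
  using ab_poly_add[OF assms(1) ab_poly_mult_coeff[OF cpoly_fun.const[of "-1"] assms(2)]]
  by simp

lemma ab_poly_mult_a:
  assumes "ab_poly g N M"
  shows "ab_poly (\<lambda>a b x. a * g a b x) (Suc N) M"
proof -
  obtain c where c: "\<And>a b x. g a b x = (\<Sum>p\<le>N. \<Sum>r\<le>M. c p r x * a ^ p * b ^ r)"
    "\<And>p r. cpoly_fun (c p r)"
    using assms unfolding ab_poly_def by blast
  show ?thesis
  proof (rule ab_polyI[of "\<lambda>p r. if p = 0 then (\<lambda>x. 0) else c (p - 1) r"])
    show "cpoly_fun (if p = 0 then (\<lambda>x. 0) else c (p - 1) r)" for p r
      by (simp add: c(2) cpoly_fun.const)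
    show "a * g a b x = (\<Sum>p\<le>Suc N. \<Sum>r\<le>M. (if p = 0 then (\<lambda>x. 0) else c (p - 1) r) x * a ^ p * b ^ r)"
      for a b x
      unfolding sum.atMost_Suc_shift by (simp add: c(1) sum_distrib_left mult_ac)
  qed
qed

lemma ab_poly_mult_b:
  assumes "ab_poly g N M"
  shows "ab_poly (\<lambda>a b x. b * g a b x) N (Suc M)"
proof -
  obtain c where c: "\<And>a b x. g a b x = (\<Sum>p\<le>N. \<Sum>r\<le>M. c p r x * a ^ p * b ^ r)"
    "\<And>p r. cpoly_fun (c p r)"
    using assms unfolding ab_poly_def by blast
  show ?thesis
  proof (rule ab_polyI[of "\<lambda>p r. if r = 0 then (\<lambda>x. 0) else c p (r - 1)"])
    show "cpoly_fun (if r = 0 then (\<lambda>x. 0) else c p (r - 1))" for p r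
      by (simp add: c(2) cpoly_fun.const)
    show "b * g a b x = (\<Sum>p\<le>N. \<Sum>r\<le>Suc M. (if r = 0 then (\<lambda>x. 0) else c p (r - 1)) x * a ^ p * b ^ r)"
      for a b x
      unfolding sum.atMost_Suc_shift by (simp add: c(1) sum_distrib_left mult_ac)
  qed
qed

lemma ab_poly_mult_monomial:
  assumes "ab_poly g N M"
  shows "ab_poly (\<lambda>a b x. a ^ p * b ^ r * g a b x) (N + p) (M + r)"
proof (induction p)
  case 0
  show ?case
  proof (induction r)
    case 0
    show ?case using assms by simp
  next
    case (Suc r)
    then show ?case using ab_poly_mult_b by (fastforce simp: mult_ac)
  qed
next
  case (Suc p)
  then show ?case using ab_poly_mult_a by (fastforce simp: mult_ac)
qed

lemma ab_poly_sum:
  assumes "finite A" "\<And>i. i \<in> A \<Longrightarrow> ab_poly (g i) N M"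
  shows "ab_poly (\<lambda>a b x. \<Sum>i\<in>A. g i a b x) N M"
  using assms
proof (induction rule: finite_induct)
  case empty
  show ?case using ab_poly_mono[OF ab_poly_coeff[OF cpoly_fun.const[of 0]]] by simp
next
  case (insert i A)
  then show ?case using ab_poly_add[of "g i" N M] by simp
qed

lemma ab_poly_mult:
  assumes "ab_poly g N M" "ab_poly h N' M'"
  shows "ab_poly (\<lambda>a b x. g a b x * h a b x) (N + N') (M + M')"
proof -
  obtain c where c: "\<And>a b x. h a b x = (\<Sum>p\<le>N'. \<Sum>r\<le>M'. c p r x * a ^ p * b ^ r)"
    "\<And>p r. cpoly_fun (c p r)"
    using assms(2) unfolding ab_poly_def by blast
  have "ab_poly (\<lambda>a b x. \<Sum>p\<le>N'. \<Sum>r\<le>M'. c p r x * (a ^ p * b ^ r * g a b x)) (N + N') (M + M')"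
    by (intro ab_poly_sum ab_poly_mult_coeff c(2))
       (auto intro: ab_poly_mono[OF ab_poly_mult_monomial[OF assms(1)]])
  then show ?thesis
    by (simp add: c(1) sum_distrib_left sum_distrib_right mult_ac)
qed

lemma ab_poly_prod:
  assumes "finite A" "\<And>i. i \<in> A \<Longrightarrow> ab_poly (g i) (N i) (M i)"
  shows "ab_poly (\<lambda>a b x. \<Prod>i\<in>A. g i a b x) (\<Sum>i\<in>A. N i) (\<Sum>i\<in>A. M i)"
  using assms
proof (induction rule: finite_induct)
  case empty
  show ?case using ab_poly_coeff[OF cpoly_fun.const[of 1]] by simp
next
  case (insert i A)
  then show ?case using ab_poly_mult[of "g i" "N i" "M i"] by simp
qed

lemma ab_poly_prod_a_minus:
  assumes "finite H"
  shows "ab_poly (\<lambda>a b x. \<Prod>h\<in>H. a - c h) (card H) 0"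
proof -
  have linear: "ab_poly (\<lambda>a b x. a - c h) 1 0" for h
    using ab_poly_diff[OF ab_poly_var_a ab_poly_mono[OF ab_poly_coeff[OF cpoly_fun.const[of "c h"]]]]
    by simp
  have "ab_poly (\<lambda>a b x. \<Prod>h\<in>H. a - c h) (\<Sum>h\<in>H. 1) (\<Sum>h\<in>H. 0)"
    by (rule ab_poly_prod[OF assms linear])
  then show ?thesis by simp
qed

lemma ab_poly_prod_one_minus_b:
  assumes "finite K" "\<And>k. k \<in> K \<Longrightarrow> cpoly_fun (v k)"
  shows "ab_poly (\<lambda>a b x. \<Prod>k\<in>K. 1 - b * v k x) 0 (card K)"
proof -
  have linear: "ab_poly (\<lambda>a b x. 1 - b * v k x) 0 1" if "k \<in> K" for k
    using ab_poly_diff[OF ab_poly_mono[OF ab_poly_coeff[OF cpoly_fun.const[of 1]]]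
                          ab_poly_mult[OF ab_poly_var_b ab_poly_coeff[OF assms(2)[OF that]]]]
    by simp
  have "ab_poly (\<lambda>a b x. \<Prod>k\<in>K. 1 - b * v k x) (\<Sum>k\<in>K. 0) (\<Sum>k\<in>K. 1)"
    by (rule ab_poly_prod[OF assms(1) linear])
  then show ?thesis by simp
qed

lemma ab_poly_q_explicit:
  fixes t u :: "nat \<Rightarrow> nat \<Rightarrow> complex^'n \<Rightarrow> complex"
  assumes "\<forall>i\<in>{1..d}. fi i \<le> f"
    and "\<forall>i\<in>{1..d}. \<forall>j\<in>{1..e i}. cpoly_fun (t i j)"
    and "\<forall>i\<in>{1..d}. \<forall>k\<in>{1..fi i}. cpoly_fun (u i k)"
  shows "ab_poly (q_explicit d e fi t u) (2 * d - 1) (f + 1)"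
proof -
  have summand: "ab_poly (\<lambda>a b x. (\<Prod>h\<in>{1..d} - {i}. a - of_nat h) * (\<Prod>j=1..e i. t i j x)
                   * (\<Prod>k=1..fi i. 1 - b * u i k x)) (d - 1) f"
    if i: "i \<in> {1..d}" for i
  proof -
    have "ab_poly (\<lambda>a b x. (\<Prod>h\<in>{1..d} - {i}. a - of_nat h) * (\<Prod>j=1..e i. t i j x)
            * (\<Prod>k=1..fi i. 1 - b * u i k x)) (card ({1..d} - {i}) + 0 + 0) (0 + 0 + card {1..fi i})"
      using assms(2,3) i
      by (intro ab_poly_mult ab_poly_prod_a_minus ab_poly_coeff cpoly_fun_prod
          ab_poly_prod_one_minus_b) auto
    then show ?thesis
      by (rule ab_poly_mono) (use i assms(1) in auto)
  qed
  have "ab_poly (\<lambda>a b x. 1 - b * (\<Prod>h\<in>{1..d}. a - of_nat h)) d 1"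
    using ab_poly_diff[OF ab_poly_mono[OF ab_poly_coeff[OF cpoly_fun.const[of 1]]]
                          ab_poly_mult[OF ab_poly_var_b ab_poly_prod_a_minus[of "{1..d}"]]]
    by simp
  moreover have "ab_poly (\<lambda>a b x. \<Sum>i=1..d. (\<Prod>h\<in>{1..d} - {i}. a - of_nat h)
                    * (\<Prod>j=1..e i. t i j x) * (\<Prod>k=1..fi i. 1 - b * u i k x)) (d - 1) f"
    by (rule ab_poly_sum) (use summand in auto)
  ultimately have "ab_poly (q_explicit d e fi t u) (d + (d - 1)) (1 + f)"
    unfolding q_explicit_def[abs_def] by (rule ab_poly_mult)
  moreover have "d + (d - 1) = 2 * d - 1" by arith
  ultimately show ?thesis by (simp add: add.commute)
qed

lemma ex_mult_prod_one_minus_eq_0_iff: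
  fixes c :: "'a::field" and v :: "'k \<Rightarrow> 'a"
  assumes "finite K"
  shows "(\<exists>b. c * (\<Prod>k\<in>K. 1 - b * v k) = 0) \<longleftrightarrow> c = 0 \<or> (\<exists>k\<in>K. v k \<noteq> 0)"
proof
  assume "\<exists>b. c * (\<Prod>k\<in>K. 1 - b * v k) = 0"
  then obtain b where "c * (\<Prod>k\<in>K. 1 - b * v k) = 0" by blast
  then show "c = 0 \<or> (\<exists>k\<in>K. v k \<noteq> 0)"
    by (cases "\<forall>k\<in>K. v k = 0") auto
next
  assume "c = 0 \<or> (\<exists>k\<in>K. v k \<noteq> 0)"
  then show "\<exists>b. c * (\<Prod>k\<in>K. 1 - b * v k) = 0"
  proof
    assume "\<exists>k\<in>K. v k \<noteq> 0"
    then obtain k0 where "k0 \<in> K" "v k0 \<noteq> 0" by blast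
    then have "c * (\<Prod>k\<in>K. 1 - (1 / v k0) * v k) = 0"
      using assms by (auto simp: prod_zero_iff)
    then show ?thesis by blast
  qed simp
qed

lemma q_explicit_at_node:
  assumes "i \<in> {1..d}"
  shows "q_explicit d e fi t u (of_nat i) b x
           = (\<Prod>h\<in>{1..d} - {i}. of_nat i - of_nat h)
             * ((\<Prod>j=1..e i. t i j x) * (\<Prod>k=1..fi i. 1 - b * u i k x))"
proof -
  define F where "F l = (\<Prod>h\<in>{1..d} - {l}. of_nat i - of_nat h) * (\<Prod>j=1..e l. t l j x)
                         * (\<Prod>k=1..fi l. 1 - b * u l k x)" for l
  have "F l = 0" if "l \<in> {1..d} - {i}" for l
    using assms that by (auto simp: F_def prod_zero_iff)
  then have "(\<Sum>l=1..d. F l) = F i"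
    using assms by (simp add: sum.remove)
  moreover have "(\<Prod>h=1..d. (of_nat i :: complex) - of_nat h) = 0"
    using assms by (auto simp: prod_zero_iff)
  ultimately show ?thesis
    by (simp add: q_explicit_def F_def mult.assoc)
qed

lemma q_explicit_off_nodes:
  assumes "a \<notin> of_nat ` {1..d}"
  shows "\<exists>b. q_explicit d e fi t u a b x = 0"
proof -
  have "(\<Prod>h=1..d. a - of_nat h) \<noteq> 0"
    using assms by (auto simp: prod_zero_iff)
  then have "q_explicit d e fi t u a (1 / (\<Prod>h=1..d. a - of_nat h)) x = 0"
    by (simp add: q_explicit_def)
  then show ?thesis by blast
qed

lemma cnf_eval_iff_q_explicit:
  "cnf_eval d e fi t u x \<longleftrightarrow> (\<forall>a. \<exists>b. q_explicit d e fi t u a b x = 0)"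
proof -
  have node_factor: "(\<Prod>h\<in>{1..d} - {i}. (of_nat i :: complex) - of_nat h) \<noteq> 0" for i
    by (auto simp: prod_zero_iff)
  have "(\<forall>a. \<exists>b. q_explicit d e fi t u a b x = 0)
          \<longleftrightarrow> (\<forall>a\<in>of_nat ` {1..d}. \<exists>b. q_explicit d e fi t u a b x = 0)"
    using q_explicit_off_nodes by (metis (no_types, lifting))
  also have "\<dots> \<longleftrightarrow> (\<forall>i\<in>{1..d}. \<exists>b. q_explicit d e fi t u (of_nat i) b x = 0)"
    by simp
  also have "\<dots> \<longleftrightarrow> (\<forall>i\<in>{1..d}. \<exists>b. (\<Prod>j=1..e i. t i j x) * (\<Prod>k=1..fi i. 1 - b * u i k x) = 0)"
    by (simp add: q_explicit_at_node node_factor)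
  also have "\<dots> \<longleftrightarrow> cnf_eval d e fi t u x"
    unfolding ex_mult_prod_one_minus_eq_0_iff[OF finite_atLeastAtMost]
    by (simp add: prod_zero_iff cnf_eval_def)
  finally show ?thesis ..
qed

theorem theorem5p1:
  fixes d f :: nat and e fi :: "nat \<Rightarrow> nat"
    and t u :: "nat \<Rightarrow> nat \<Rightarrow> complex^'n \<Rightarrow> complex"
  assumes "d \<ge> 1"
    and "\<forall>i\<in>{1..d}. fi i \<le> f"
    and "\<forall>i\<in>{1..d}. \<forall>j\<in>{1..e i}. cpoly_fun (t i j)"
    and "\<forall>i\<in>{1..d}. \<forall>k\<in>{1..fi i}. cpoly_fun (u i k)"
  shows "\<exists>c :: nat \<Rightarrow> nat \<Rightarrow> complex^'n \<Rightarrow> complex.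
           (\<forall>p r. cpoly_fun (c p r)) \<and>
           (\<forall>a b x. q_explicit d e fi t u a b x
                      = (\<Sum>p\<le>2*d-1. \<Sum>r\<le>f+1. c p r x * a ^ p * b ^ r)) \<and>
           (\<forall>x. cnf_eval d e fi t u x \<longleftrightarrow>
                  (\<forall>a. \<exists>b. q_explicit d e fi t u a b x = 0))"
  using ab_poly_q_explicit[OF assms(2-4)] cnf_eval_iff_q_explicit
  unfolding ab_poly_def by blast

end
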